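(* Let $\mathcal{B}=(T,\bowtie)$ be a block and let $(B_1,\dots,B_k)$ be a legal partition of $T$. Then $\mathrm{LevelSchedule}(B_1,\dots,B_k)$ returns a valid schedule of $\mathcal{B}$.
   Context: A block consists of a finite set $T$ of transactions with a symmetric irreflexive conflict relation $\bowtie$ on $T$. A set $A\subseteq T$ is conflict-free if no two elements of $A$ conflict. A legal partition of $T$ is an ordered sequence $(B_1,\dots,B_k)$ of pairwise disjoint conflict-free sets whose union is $T$. A schedule is a set $\mathcal S\subseteq T\times T$ such that the directed graph $(T,\mathcal S)$ is acyclic; it is valid if for every pair $tx\bowtie tx'$ the graph $(T,\mathcal S)$ contains a directed path from $tx$ to $tx'$ or from $tx'$ to $tx$. $\mathrm{LevelSchedule}(B_1,\dots,B_k)$ is computed as follows: set $B_0=\emptyset$ and $\mathcal S=\emptyset$; for $i=1,\dots,k$ (increasing) and, for each such $i$, for $j=i-1,i-2,\dots,0$ (decreasing): let $E=\{(u,v)\in B_j\times B_i : u\bowtie v\}$, let $P$ be the set of pairs $(x,y)$ such that the current directed graph $(T,\mathcal S)$ contains a directed path from $x$ to $y$, and replace $\mathcal S$ by $\mathcal S\cup(E\setminus P)$. The output is the final $\mathcal S$. *)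

theory Defs
  imports Main
begin

definition block :: "'a set \<Rightarrow> ('a \<times> 'a) set \<Rightarrow> bool" where
  "block T C \<longleftrightarrow> finite T \<and> C \<subseteq> T \<times> T \<and> sym C \<and> irrefl C"

definition conflict_free :: "('a \<times> 'a) set \<Rightarrow> 'a set \<Rightarrow> bool" where
  "conflict_free C A \<longleftrightarrow> (\<forall>x\<in>A. \<forall>y\<in>A. (x, y) \<notin> C)"

(* legal partition (B_1,...,B_k) given as the list Bs = [B_1,...,B_k] *)
definition legal_partition :: "'a set \<Rightarrow> ('a \<times> 'a) set \<Rightarrow> 'a set list \<Rightarrow> bool" where
  "legal_partition T C Bs \<longleftrightarrow>
     (\<forall>i<length Bs. \<forall>j<length Bs. i \<noteq> j \<longrightarrow> Bs ! i \<inter> Bs ! j = {}) \<and>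
     (\<forall>B\<in>set Bs. conflict_free C B) \<and>
     \<Union> (set Bs) = T"

definition schedule :: "'a set \<Rightarrow> ('a \<times> 'a) set \<Rightarrow> bool" where
  "schedule T S \<longleftrightarrow> S \<subseteq> T \<times> T \<and> acyclic S"

definition valid_schedule :: "'a set \<Rightarrow> ('a \<times> 'a) set \<Rightarrow> ('a \<times> 'a) set \<Rightarrow> bool" where
  "valid_schedule T C S \<longleftrightarrow> schedule T S \<and>
     (\<forall>x y. (x, y) \<in> C \<longrightarrow> (x, y) \<in> S\<^sup>+ \<or> (y, x) \<in> S\<^sup>+)"

(* B_i with the convention B_0 = {} *)
definition level :: "'a set list \<Rightarrow> nat \<Rightarrow> 'a set" where
  "level Bs i = (if i = 0 then {} else Bs ! (i - 1))"

definition level_step :: "('a \<times> 'a) set \<Rightarrow> 'a set list \<Rightarrow> nat \<Rightarrow> nat \<Rightarrow> ('a \<times> 'a) set \<Rightarrow> ('a \<times> 'a) set" where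
  "level_step C Bs i j S =
     S \<union> ({(u, v). u \<in> level Bs j \<and> v \<in> level Bs i \<and> (u, v) \<in> C} - S\<^sup>+)"

definition LevelSchedule :: "('a \<times> 'a) set \<Rightarrow> 'a set list \<Rightarrow> ('a \<times> 'a) set" where
  "LevelSchedule C Bs =
     foldl (\<lambda>S i. foldl (\<lambda>S' j. level_step C Bs i j S') S (rev [0..<i]))
       {} [1..<length Bs + 1]"

end

theory Submission
  imports Defs "HOL-Library.Disjoint_Sets"
begin

text \<open>Every edge added by LevelSchedule is a conflict leading from a block to a strictly
  later block. Since the blocks are disjoint, the relation "lies in a strictly later block" is a
  strict order, so the schedule is acyclic. A conflict between two elements lies between two
  different blocks because blocks are conflict-free; step (i, j) for these blocks either finds the
  pair already joined by a path or adds it as an edge, and paths are never destroyed because edges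
  are only ever added.\<close>

lemma foldl_invariant:
  assumes "P S" and "\<And>S x. x \<in> set xs \<Longrightarrow> P S \<Longrightarrow> P (f S x)"
  shows "P (foldl f S xs)"
  using assms by (induction xs arbitrary: S) auto

lemma foldl_inflationary:
  assumes "\<And>S x. x \<in> set xs \<Longrightarrow> S \<subseteq> f S x"
  shows "S \<subseteq> foldl f S xs"
  using assms by (induction xs arbitrary: S) (simp, fastforce)

lemma trancl_foldl_persistent:
  assumes inflationary: "\<And>S x. x \<in> set xs \<Longrightarrow> S \<subseteq> f S x"
    and "x \<in> set xs" and created: "\<And>S. p \<in> (f S x)\<^sup>+"
  shows "p \<in> (foldl f S xs)\<^sup>+"
  using assms(2) inflationary
proof (induction xs arbitrary: S)
  case Nil
  then show ?case by simp
next
  case (Cons y xs)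
  show ?case
  proof (cases "y = x")
    case True
    have "f S y \<subseteq> foldl f (f S y) xs"
      using Cons.prems(2) by (intro foldl_inflationary) simp
    moreover have "p \<in> (f S y)\<^sup>+"
      using created True by simp
    ultimately show ?thesis
      by (simp add: trancl_mono)
  next
    case False
    then show ?thesis
      using Cons by simp
  qed
qed

definition level_round ::
    "('a \<times> 'a) set \<Rightarrow> 'a set list \<Rightarrow> ('a \<times> 'a) set \<Rightarrow> nat \<Rightarrow> ('a \<times> 'a) set" where
  "level_round C Bs S i = foldl (\<lambda>S' j. level_step C Bs i j S') S (rev [0..<i])"

lemma LevelSchedule_eq_foldl_level_round:
  "LevelSchedule C Bs = foldl (level_round C Bs) {} [1..<length Bs + 1]"
  unfolding LevelSchedule_def level_round_def ..

lemma level_step_inflationary: "S \<subseteq> level_step C Bs i j S"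
  unfolding level_step_def by blast

lemma level_round_inflationary: "S \<subseteq> level_round C Bs S i"
  unfolding level_round_def by (rule foldl_inflationary) (rule level_step_inflationary)

lemma level_step_connects:
  assumes "(u, v) \<in> C" "u \<in> level Bs j" "v \<in> level Bs i"
  shows "(u, v) \<in> (level_step C Bs i j S)\<^sup>+"
proof (cases "(u, v) \<in> S\<^sup>+")
  case True
  then show ?thesis
    using trancl_mono[OF _ level_step_inflationary] by blast
next
  case False
  then have "(u, v) \<in> level_step C Bs i j S"
    using assms unfolding level_step_def by blast
  then show ?thesis by blast
qed

lemma LevelSchedule_connects:
  assumes "(u, v) \<in> C" "j < i" "i < length Bs" "u \<in> Bs ! j" "v \<in> Bs ! i"
  shows "(u, v) \<in> (LevelSchedule C Bs)\<^sup>+"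
proof -
  have round: "(u, v) \<in> (level_round C Bs S (Suc i))\<^sup>+" for S
  proof -
    have "Suc j \<in> set (rev [0..<Suc i])"
      using assms(2) by auto
    moreover have "u \<in> level Bs (Suc j)" "v \<in> level Bs (Suc i)"
      using assms unfolding level_def by simp_all
    then have "(u, v) \<in> (level_step C Bs (Suc i) (Suc j) S')\<^sup>+" for S'
      by (rule level_step_connects[OF assms(1)])
    ultimately show ?thesis
      unfolding level_round_def by (rule trancl_foldl_persistent[OF level_step_inflationary])
  qed
  have "Suc i \<in> set [1..<length Bs + 1]"
    using assms(3) by auto
  then show ?thesis
    unfolding LevelSchedule_eq_foldl_level_round using round
    by (rule trancl_foldl_persistent[OF level_round_inflationary])
qed

definition ascending_pairs :: "'a set list \<Rightarrow> ('a \<times> 'a) set" where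
  "ascending_pairs Bs = {(u, v). \<exists>i<length Bs. \<exists>j<i. u \<in> Bs ! j \<and> v \<in> Bs ! i}"

lemma level_pair_in_ascending_pairs:
  assumes "j < i" "i \<le> length Bs" "u \<in> level Bs j" "v \<in> level Bs i"
  shows "(u, v) \<in> ascending_pairs Bs"
proof -
  have "j \<noteq> 0"
    using assms(3) unfolding level_def by (cases "j = 0") auto
  then have "u \<in> Bs ! (j - 1)" "v \<in> Bs ! (i - 1)" "j - 1 < i - 1" "i - 1 < length Bs"
    using assms unfolding level_def by auto
  then show ?thesis
    unfolding ascending_pairs_def by blast
qed

lemma LevelSchedule_subset: "LevelSchedule C Bs \<subseteq> C \<inter> ascending_pairs Bs"
  unfolding LevelSchedule_eq_foldl_level_round
proof (rule foldl_invariant[where P = "\<lambda>S. S \<subseteq> C \<inter> ascending_pairs Bs"])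
  fix S i
  assume "i \<in> set [1..<length Bs + 1]" and S: "S \<subseteq> C \<inter> ascending_pairs Bs"
  then have "i \<le> length Bs" by auto
  then show "level_round C Bs S i \<subseteq> C \<inter> ascending_pairs Bs"
    unfolding level_round_def using S
    by (intro foldl_invariant[where P = "\<lambda>S. S \<subseteq> C \<inter> ascending_pairs Bs"])
      (auto simp: level_step_def intro: level_pair_in_ascending_pairs)
qed simp

lemma LevelSchedule_orders_conflict:
  assumes "sym C" and "C \<subseteq> \<Union> (set Bs) \<times> \<Union> (set Bs)"
    and "\<forall>B\<in>set Bs. conflict_free C B" and "(x, y) \<in> C"
  shows "(x, y) \<in> (LevelSchedule C Bs)\<^sup>+ \<or> (y, x) \<in> (LevelSchedule C Bs)\<^sup>+"
proof -
  have "x \<in> \<Union> (set Bs)" "y \<in> \<Union> (set Bs)"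
    using assms(2,4) by auto
  then obtain a b where a: "a < length Bs" "x \<in> Bs ! a" and b: "b < length Bs" "y \<in> Bs ! b"
    by (metis UnionE in_set_conv_nth)
  have "a \<noteq> b"
  proof
    assume "a = b"
    then show False
      using a b assms(3,4) nth_mem[of b Bs] unfolding conflict_free_def by blast
  qed
  then consider "a < b" | "b < a"
    by linarith
  then show ?thesis
  proof cases
    case 1
    then show ?thesis
      using LevelSchedule_connects[OF assms(4) 1 b(1) a(2) b(2)] by blast
  next
    case 2
    have "(y, x) \<in> C"
      using assms(1,4) by (simp add: sym_def)
    then show ?thesis
      using LevelSchedule_connects[OF _ 2 a(1) b(2) a(2)] by blast
  qed
qed

lemma trans_ascending_pairs:
  assumes "disjoint_family_on (nth Bs) {..<length Bs}"
  shows "trans (ascending_pairs Bs)"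
proof (rule transI)
  fix x y z
  assume "(x, y) \<in> ascending_pairs Bs" "(y, z) \<in> ascending_pairs Bs"
  then obtain i j i' j' where "i < length Bs" "j < i" "x \<in> Bs ! j" "y \<in> Bs ! i"
    and "i' < length Bs" "j' < i'" "y \<in> Bs ! j'" "z \<in> Bs ! i'"
    unfolding ascending_pairs_def by blast
  moreover have "i = j'"
    using disjoint_family_onD[OF assms, of i j'] calculation by fastforce
  ultimately show "(x, z) \<in> ascending_pairs Bs"
    unfolding ascending_pairs_def by (blast intro: order.strict_trans)
qed

lemma acyclic_ascending_pairs:
  assumes "disjoint_family_on (nth Bs) {..<length Bs}"
  shows "acyclic (ascending_pairs Bs)"
proof -
  have "(x, x) \<notin> ascending_pairs Bs" for x
  proof
    assume "(x, x) \<in> ascending_pairs Bs"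
    then obtain i j where "i < length Bs" "j < i" "x \<in> Bs ! j" "x \<in> Bs ! i"
      unfolding ascending_pairs_def by blast
    then show False
      using disjoint_family_onD[OF assms, of i j] by auto
  qed
  then show ?thesis
    unfolding acyclic_def using trans_ascending_pairs[OF assms] by simp
qed

theorem lemma1:
  fixes T :: "'a set" and C :: "('a \<times> 'a) set" and Bs :: "'a set list"
  assumes "block T C"
    and "legal_partition T C Bs"
  shows "valid_schedule T C (LevelSchedule C Bs)"
proof -
  have C: "C \<subseteq> T \<times> T" "sym C"
    using assms(1) unfolding block_def by auto
  have disjoint: "disjoint_family_on (nth Bs) {..<length Bs}"
    and conflict_free: "\<forall>B\<in>set Bs. conflict_free C B"
    and covers: "\<Union> (set Bs) = T"
    using assms(2) unfolding legal_partition_def disjoint_family_on_def by auto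
  have C_covered: "C \<subseteq> \<Union> (set Bs) \<times> \<Union> (set Bs)"
    using C(1) covers by simp
  have "schedule T (LevelSchedule C Bs)"
    unfolding schedule_def using LevelSchedule_subset C(1)
      acyclic_subset[OF acyclic_ascending_pairs[OF disjoint]] by blast
  moreover have "\<forall>x y. (x, y) \<in> C \<longrightarrow>
      (x, y) \<in> (LevelSchedule C Bs)\<^sup>+ \<or> (y, x) \<in> (LevelSchedule C Bs)\<^sup>+"
    using LevelSchedule_orders_conflict[OF C(2) C_covered conflict_free] by blast
  ultimately show ?thesis
    unfolding valid_schedule_def ..
qed

end
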